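(* Let $\mathcal G=((V,E),(V_1,V_2,V_\Diamond),\delta,w)$ be a stochastic game and $\varphi$ a bounded prefix-independent objective. Consider the classes of the expected value vector $\mathsf r^*=(\mathbb{E}_v(\varphi))_{v\in V}$, and suppose exactly $m\ge1$ of them contain boundary vertices. Index the classes as $C_1,\dots,C_k$ so that $C_1,\dots,C_m$ are those containing boundary vertices, listed in increasing order of value, and $C_{m+1},\dots,C_k$ are those without boundary vertices, listed in increasing order of value. For each $1\le i\le m$ fix any boundary vertex $u_i$ of $C_i$ and for $1\le j\le k$ let $p_{i,j}=\sum_{v'\in E(u_i)\cap C_j}\delta(u_i)(v')$. Let $Q_B$ be the $m\times m$ matrix $(p_{i,j})_{1\le i,j\le m}$ and $I$ the $m\times m$ identity matrix. Then $I-Q_B$ is invertible.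
   Context: A stochastic game is $\mathcal{G}=((V,E),(V_1,V_2,V_\Diamond),\delta,w)$: a finite directed graph $(V,E)$ in which every vertex $v$ has a nonempty out-neighbour set $E(v)$, a partition of $V$ into Player 1, Player 2 and probabilistic vertices, a function $\delta$ giving each $v\in V_\Diamond$ a rational probability distribution $\delta(v)$ on $E(v)$, positive on every out-neighbour, and payoffs $w:E\to\mathbb{Q}$. Plays are infinite paths; deterministic strategies of Player $i$ map finite prefixes ending in $V_i$ to an out-neighbour of the last vertex; a strategy pair and initial vertex induce a probability measure on plays. An objective $\varphi$ is a Borel-measurable real function on plays; bounded if $|\varphi|\le W_\varphi$ for an integer $W_\varphi$; prefix-independent if plays with a common suffix get equal value. Player 1 maximises and Player 2 minimises the expectation; $\mathbb{E}_v(\varphi)=\sup_{\sigma_1}\inf_{\sigma_2}\mathbb{E}^{\sigma_1,\sigma_2}_v[\varphi]=\inf_{\sigma_2}\sup_{\sigma_1}\mathbb{E}^{\sigma_1,\sigma_2}_v[\varphi]$. For a real vector $\mathsf r$ indexed by $V$, its classes are the maximal nonempty sets of vertices on which $\mathsf r$ is constant (the constant being the class value); a vertex $v$ of class $C$ is a boundary vertex if $v\in V_\Diamond$ and $E(v)\not\subseteq C$. *)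

theory Defs
  imports "HOL-Probability.Probability" "Jordan_Normal_Form.Matrix"
begin

text \<open>Vertices are the elements of a finite type 'v (so V = UNIV).
  E v is the out-neighbour set of v; d u is the distribution at a probabilistic vertex u.\<close>

definition stochastic_game ::
  "'v::finite set \<Rightarrow> 'v set \<Rightarrow> 'v set \<Rightarrow> ('v \<Rightarrow> 'v set) \<Rightarrow> ('v \<Rightarrow> 'v \<Rightarrow> real) \<Rightarrow> bool" where
  "stochastic_game V1 V2 Vp E d \<longleftrightarrow>
     (\<forall>v. E v \<noteq> {}) \<and>
     V1 \<inter> V2 = {} \<and> V1 \<inter> Vp = {} \<and> V2 \<inter> Vp = {} \<and> V1 \<union> V2 \<union> Vp = UNIV \<and>
     (\<forall>u\<in>Vp. (\<forall>v. d u v \<in> \<rat>) \<and> (\<forall>v\<in>E u. d u v > 0) \<and>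
              (\<forall>v. v \<notin> E u \<longrightarrow> d u v = 0) \<and> (\<Sum>v\<in>E u. d u v) = 1)"

definition is_play :: "('v \<Rightarrow> 'v set) \<Rightarrow> 'v stream \<Rightarrow> bool" where
  "is_play E \<rho> \<longleftrightarrow> (\<forall>i. \<rho> !! Suc i \<in> E (\<rho> !! i))"

definition strategies :: "'v set \<Rightarrow> ('v \<Rightarrow> 'v set) \<Rightarrow> ('v list \<Rightarrow> 'v) set" where
  "strategies Vi E = {\<sigma>. \<forall>h. h \<noteq> [] \<and> last h \<in> Vi \<longrightarrow> \<sigma> h \<in> E (last h)}"

definition trans_prob ::
  "'v set \<Rightarrow> 'v set \<Rightarrow> ('v \<Rightarrow> 'v \<Rightarrow> real) \<Rightarrow> ('v list \<Rightarrow> 'v) \<Rightarrow> ('v list \<Rightarrow> 'v) \<Rightarrow> 'v list \<Rightarrow> 'v \<Rightarrow> real" where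
  "trans_prob V1 V2 d \<sigma>1 \<sigma>2 h v' =
     (if last h \<in> V1 then (if v' = \<sigma>1 h then 1 else 0)
      else if last h \<in> V2 then (if v' = \<sigma>2 h then 1 else 0)
      else d (last h) v')"

definition prefix_prob ::
  "'v set \<Rightarrow> 'v set \<Rightarrow> ('v \<Rightarrow> 'v \<Rightarrow> real) \<Rightarrow> ('v list \<Rightarrow> 'v) \<Rightarrow> ('v list \<Rightarrow> 'v) \<Rightarrow> 'v \<Rightarrow> 'v list \<Rightarrow> real" where
  "prefix_prob V1 V2 d \<sigma>1 \<sigma>2 v xs =
     (if xs = [] then 1 else if hd xs \<noteq> v then 0
      else (\<Prod>k\<in>{1..<length xs}. trans_prob V1 V2 d \<sigma>1 \<sigma>2 (take k xs) (xs ! k)))"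

definition play_measure ::
  "'v set \<Rightarrow> 'v set \<Rightarrow> ('v \<Rightarrow> 'v \<Rightarrow> real) \<Rightarrow> ('v list \<Rightarrow> 'v) \<Rightarrow> ('v list \<Rightarrow> 'v) \<Rightarrow> 'v \<Rightarrow> 'v stream measure" where
  "play_measure V1 V2 d \<sigma>1 \<sigma>2 v =
     (SOME M. sets M = sets (stream_space (count_space UNIV)) \<and> prob_space M \<and>
        (\<forall>xs. measure M {\<omega> \<in> space M. stake (length xs) \<omega> = xs} = prefix_prob V1 V2 d \<sigma>1 \<sigma>2 v xs))"

definition expected_payoff ::
  "'v set \<Rightarrow> 'v set \<Rightarrow> ('v \<Rightarrow> 'v \<Rightarrow> real) \<Rightarrow> ('v stream \<Rightarrow> real) \<Rightarrow> ('v list \<Rightarrow> 'v) \<Rightarrow> ('v list \<Rightarrow> 'v) \<Rightarrow> 'v \<Rightarrow> real" where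
  "expected_payoff V1 V2 d \<phi> \<sigma>1 \<sigma>2 v = integral\<^sup>L (play_measure V1 V2 d \<sigma>1 \<sigma>2 v) \<phi>"

definition game_value ::
  "'v set \<Rightarrow> 'v set \<Rightarrow> ('v \<Rightarrow> 'v set) \<Rightarrow> ('v \<Rightarrow> 'v \<Rightarrow> real) \<Rightarrow> ('v stream \<Rightarrow> real) \<Rightarrow> 'v \<Rightarrow> real" where
  "game_value V1 V2 E d \<phi> v =
     (SUP \<sigma>1\<in>strategies V1 E. INF \<sigma>2\<in>strategies V2 E. expected_payoff V1 V2 d \<phi> \<sigma>1 \<sigma>2 v)"

definition bounded_objective :: "('v \<Rightarrow> 'v set) \<Rightarrow> ('v stream \<Rightarrow> real) \<Rightarrow> bool" where
  "bounded_objective E \<phi> \<longleftrightarrow> (\<exists>W::int. \<forall>\<rho>. is_play E \<rho> \<longrightarrow> \<bar>\<phi> \<rho>\<bar> \<le> of_int W)"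

definition prefix_independent :: "('v \<Rightarrow> 'v set) \<Rightarrow> ('v stream \<Rightarrow> real) \<Rightarrow> bool" where
  "prefix_independent E \<phi> \<longleftrightarrow>
     (\<forall>\<rho> \<rho>' i j. is_play E \<rho> \<and> is_play E \<rho>' \<and> sdrop i \<rho> = sdrop j \<rho>' \<longrightarrow> \<phi> \<rho> = \<phi> \<rho>')"

definition val_class :: "('v \<Rightarrow> real) \<Rightarrow> 'v \<Rightarrow> 'v set" where
  "val_class r v = {u. r u = r v}"

definition is_boundary :: "'v set \<Rightarrow> ('v \<Rightarrow> 'v set) \<Rightarrow> ('v \<Rightarrow> real) \<Rightarrow> 'v \<Rightarrow> bool" where
  "is_boundary Vp E r v \<longleftrightarrow> v \<in> Vp \<and> \<not> E v \<subseteq> val_class r v"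

definition boundary_values :: "'v set \<Rightarrow> ('v \<Rightarrow> 'v set) \<Rightarrow> ('v \<Rightarrow> real) \<Rightarrow> real list" where
  "boundary_values Vp E r = sorted_list_of_set {r v | v. is_boundary Vp E r v}"

end

theory Submission
  imports Defs "Jordan_Normal_Form.Determinant"
begin

text \<open>Write \<open>r\<close> for the value vector. At a random vertex \<open>u\<close>, Player 2 can answer each first
  move \<open>v\<close> by an \<open>\<epsilon>\<close>-optimal strategy from \<open>v\<close>; as the objective is prefix-independent, this
  gives \<open>r u \<le> \<Sum>\<^sub>v \<delta>(u)(v) r v\<close>. The matrix \<open>Q\<^sub>B\<close> is substochastic, so if \<open>I - Q\<^sub>B\<close> were singular,
  the coordinates of maximal modulus of a kernel vector would form a nonempty set of boundary
  classes closed under the transitions of \<open>Q\<^sub>B\<close>, all of whose rows sum to one. For the class of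
  largest value in that set, every successor of its boundary vertex \<open>u\<^sub>i\<close> then has value at most
  \<open>r u\<^sub>i\<close>, and some successor has a different, hence smaller, value; so \<open>r u\<^sub>i\<close> exceeds the
  average over its successors, a contradiction.\<close>

section \<open>Streams generated from their own history\<close>

primcorec hist_stream :: "('a list \<Rightarrow> 'b \<Rightarrow> 'a) \<Rightarrow> 'a list \<Rightarrow> 'b stream \<Rightarrow> 'a stream" where
  "hist_stream nx h \<omega> = nx h (shd \<omega>) ## hist_stream nx (h @ [nx h (shd \<omega>)]) (stl \<omega>)"

lemma hist_stream_Stream: "hist_stream nx h (t ## \<omega>) = nx h t ## hist_stream nx (h @ [nx h t]) \<omega>"
  by (subst hist_stream.code) simp

lemma stake_hist_stream_cong:
  "stake n \<omega> = stake n \<omega>' \<Longrightarrow> stake n (hist_stream nx h \<omega>) = stake n (hist_stream nx h \<omega>')"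
proof (induction n arbitrary: h \<omega> \<omega>')
  case (Suc n)
  obtain t s t' s' where \<omega>: "\<omega> = t ## s" "\<omega>' = t' ## s'"
    by (meson stream.exhaust)
  from Suc.prems have "t = t'" and tail: "stake n s = stake n s'"
    unfolding \<omega> by (simp_all only: stake.simps(2) stream.sel list.inject)
  then show ?case
    unfolding \<omega> hist_stream_Stream by (simp only: stake.simps(2) stream.sel Suc.IH[OF tail])
qed simp

lemma measurable_stake_hist_stream:
  "(\<lambda>\<omega>. stake n (hist_stream nx h \<omega>))
     \<in> stream_space (count_space (UNIV :: 'b::countable set)) \<rightarrow>\<^sub>M count_space UNIV"
proof -
  have "(\<lambda>\<omega>. stake n (hist_stream nx h \<omega>)) = (\<lambda>l. stake n (hist_stream nx h (l @- sconst undefined))) \<circ> stake n"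
    unfolding o_def by (intro ext stake_hist_stream_cong) (simp add: stake_shift)
  also have "\<dots> \<in> stream_space (count_space UNIV) \<rightarrow>\<^sub>M count_space UNIV"
    by (rule measurable_comp[OF measurable_stake]) simp
  finally show ?thesis .
qed

lemma measurable_hist_stream:
  "hist_stream nx h
     \<in> stream_space (count_space (UNIV :: 'b::countable set)) \<rightarrow>\<^sub>M stream_space (count_space UNIV)"
proof (rule measurable_stream_space2)
  fix n
  have "(\<lambda>\<omega>. hist_stream nx h \<omega> !! n) = (\<lambda>l. l ! n) \<circ> (\<lambda>\<omega>. stake (Suc n) (hist_stream nx h \<omega>))"
    by (rule ext) (simp only: stake_nth lessI o_def)
  also have "\<dots> \<in> stream_space (count_space UNIV) \<rightarrow>\<^sub>M count_space UNIV"
    by (rule measurable_comp[OF measurable_stake_hist_stream]) simp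
  finally show "(\<lambda>\<omega>. hist_stream nx h \<omega> !! n) \<in> stream_space (count_space UNIV) \<rightarrow>\<^sub>M count_space UNIV" .
qed

lemma sets_stream_space_measure_pmf:
  "sets (stream_space (measure_pmf P)) = sets (stream_space (count_space UNIV))"
  by (rule sets_stream_space_cong) simp

lemma emeasure_hist_stream_cylinder:
  fixes P :: "'b::countable pmf"
  shows "emeasure (stream_space (measure_pmf P)) {\<omega>. stake (length ys) (hist_stream nx h \<omega>) = ys}
     = ennreal (\<Prod>k<length ys. pmf (map_pmf (nx (h @ take k ys)) P) (ys ! k))"
proof (induction ys arbitrary: h)
  case Nil
  interpret prob_space "stream_space (measure_pmf P)"
    by (rule prob_space.prob_space_stream_space, rule prob_space_measure_pmf)
  show ?case
    using emeasure_space_1 by (simp add: space_stream_space)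
next
  case (Cons y ys)
  let ?SB = "stream_space (measure_pmf P)"
  let ?C = "\<lambda>h ys. {\<omega>. stake (length ys) (hist_stream nx h \<omega>) = ys}"
  let ?p = "\<Prod>k<length ys. pmf (map_pmf (nx ((h @ [y]) @ take k ys)) P) (ys ! k)"
  have "(\<lambda>\<omega>. stake (length (y # ys)) (hist_stream nx h \<omega>)) \<in> ?SB \<rightarrow>\<^sub>M count_space UNIV"
    using measurable_stake_hist_stream
    by (simp only: measurable_cong_sets[OF sets_stream_space_measure_pmf refl])
  from measurable_sets[OF this, of "{y # ys}"]
  have cylinder: "?C h (y # ys) \<in> sets ?SB"
    by (simp add: space_stream_space vimage_def)
  have slice: "{x \<in> space ?SB. t ## x \<in> ?C h (y # ys)} = (if nx h t = y then ?C (h @ [y]) ys else {})"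
    for t
    by (auto simp: space_stream_space hist_stream_Stream)
  have "emeasure ?SB (?C h (y # ys)) = (\<integral>\<^sup>+t. emeasure ?SB {x \<in> space ?SB. t ## x \<in> ?C h (y # ys)} \<partial>P)"
    by (rule prob_space.emeasure_stream_space[OF prob_space_measure_pmf cylinder])
  also have "\<dots> = (\<integral>\<^sup>+t. ennreal ?p * indicator {t. nx h t = y} t \<partial>P)"
    by (rule nn_integral_cong) (simp only: slice, simp add: Cons.IH)
  also have "\<dots> = ennreal ?p * emeasure P {t. nx h t = y}"
    by (rule nn_integral_cmult_indicator) simp
  also have "emeasure P {t. nx h t = y} = ennreal (pmf (map_pmf (nx h) P) y)"
    by (simp add: pmf_map measure_pmf.emeasure_eq_measure vimage_def)
  finally show ?case
    by (simp add: prod.lessThan_Suc_shift ennreal_mult prod_nonneg mult.commute del: prod.lessThan_Suc)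
qed

section \<open>The play measure\<close>

lemma sets_stake_cylinder:
  "{\<omega>. stake n \<omega> = xs} \<in> sets (stream_space (count_space (UNIV :: 'a::countable set)))"
proof -
  have "{\<omega> \<in> space (stream_space (count_space UNIV)). stake n \<omega> = xs}
      \<in> sets (stream_space (count_space (UNIV :: 'a set)))"
    by measurable
  then show ?thesis
    by (simp add: space_stream_space)
qed

locale stoch_game =
  fixes V1 V2 Vp :: "'v::finite set" and E :: "'v \<Rightarrow> 'v set" and d :: "'v \<Rightarrow> 'v \<Rightarrow> real"
  assumes game: "stochastic_game V1 V2 Vp E d"
begin

lemma E_nonempty: "E v \<noteq> {}"
  using game by (simp add: stochastic_game_def)

lemma owner_cases:
  obtains "v \<in> V1" | "v \<in> V2" "v \<notin> V1" | "v \<in> Vp" "v \<notin> V1" "v \<notin> V2"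
  using game unfolding stochastic_game_def by blast

lemma Vp_not_V1: "v \<in> Vp \<Longrightarrow> v \<notin> V1"
  and Vp_not_V2: "v \<in> Vp \<Longrightarrow> v \<notin> V2"
  using game unfolding stochastic_game_def by blast+

lemma d_pos: "u \<in> Vp \<Longrightarrow> v \<in> E u \<Longrightarrow> 0 < d u v"
  and d_eq_0: "u \<in> Vp \<Longrightarrow> v \<notin> E u \<Longrightarrow> d u v = 0"
  and sum_d: "u \<in> Vp \<Longrightarrow> sum (d u) (E u) = 1"
  using game unfolding stochastic_game_def by blast+

lemma d_nonneg: "u \<in> Vp \<Longrightarrow> 0 \<le> d u v"
  using d_pos[of u v] d_eq_0[of u v] by (cases "v \<in> E u") auto

lemma sum_d_UNIV: "u \<in> Vp \<Longrightarrow> sum (d u) UNIV = 1"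
  using sum_d[of u] sum.mono_neutral_right[of UNIV "E u" "d u"] d_eq_0[of u] by simp

abbreviation PM :: "('v list \<Rightarrow> 'v) \<Rightarrow> ('v list \<Rightarrow> 'v) \<Rightarrow> 'v \<Rightarrow> 'v stream measure" where
  "PM \<sigma>1 \<sigma>2 v \<equiv> play_measure V1 V2 d \<sigma>1 \<sigma>2 v"

abbreviation S :: "'v stream measure" where
  "S \<equiv> stream_space (count_space UNIV)"

definition move_pmf :: "'v \<Rightarrow> 'v pmf" where
  "move_pmf w = (if w \<in> Vp then embed_pmf (d w) else return_pmf w)"

lemma pmf_move_pmf:
  assumes w: "w \<in> Vp"
  shows "pmf (move_pmf w) x = d w x"
proof -
  have "(\<integral>\<^sup>+x. ennreal (d w x) \<partial>count_space UNIV) = ennreal (sum (d w) UNIV)"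
    by (simp add: nn_integral_count_space_finite sum_ennreal d_nonneg[OF w])
  then show ?thesis
    using w pmf_embed_pmf[of "d w"] by (simp add: move_pmf_def d_nonneg sum_d_UNIV)
qed

text \<open>Letting the strategies act on an i.i.d.\ stream of such random choice functions realises
  the play measure.\<close>

definition choice_pmf :: "('v \<Rightarrow> 'v) pmf" where
  "choice_pmf = Pi_pmf UNIV undefined move_pmf"

definition next_vertex :: "('v list \<Rightarrow> 'v) \<Rightarrow> ('v list \<Rightarrow> 'v) \<Rightarrow> 'v list \<Rightarrow> ('v \<Rightarrow> 'v) \<Rightarrow> 'v" where
  "next_vertex \<sigma>1 \<sigma>2 h f = (if last h \<in> V1 then \<sigma>1 h else if last h \<in> V2 then \<sigma>2 h else f (last h))"

lemma pmf_map_next_vertex: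
  "pmf (map_pmf (next_vertex \<sigma>1 \<sigma>2 h) choice_pmf) y = trans_prob V1 V2 d \<sigma>1 \<sigma>2 h y"
proof (cases rule: owner_cases[of "last h"])
  case 1
  then have "next_vertex \<sigma>1 \<sigma>2 h = (\<lambda>_. \<sigma>1 h)"
    by (simp add: next_vertex_def fun_eq_iff)
  with 1 show ?thesis
    by (simp add: trans_prob_def indicator_def)
next
  case 2
  then have "next_vertex \<sigma>1 \<sigma>2 h = (\<lambda>_. \<sigma>2 h)"
    by (simp add: next_vertex_def fun_eq_iff)
  with 2 show ?thesis
    by (simp add: trans_prob_def indicator_def)
next
  case 3
  then have "next_vertex \<sigma>1 \<sigma>2 h = (\<lambda>f. f (last h))"
    by (simp add: next_vertex_def fun_eq_iff)
  with 3 show ?thesis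
    by (simp add: trans_prob_def choice_pmf_def Pi_pmf_component pmf_move_pmf)
qed

lemma prefix_prob_Cons:
  "prefix_prob V1 V2 d \<sigma>1 \<sigma>2 v (v # ys)
     = (\<Prod>k<length ys. trans_prob V1 V2 d \<sigma>1 \<sigma>2 (v # take k ys) (ys ! k))"
proof -
  have "prefix_prob V1 V2 d \<sigma>1 \<sigma>2 v (v # ys)
      = (\<Prod>k\<in>{Suc 0..<Suc (length ys)}. trans_prob V1 V2 d \<sigma>1 \<sigma>2 (take k (v # ys)) ((v # ys) ! k))"
    by (simp add: prefix_prob_def)
  also have "\<dots> = (\<Prod>k<length ys. trans_prob V1 V2 d \<sigma>1 \<sigma>2 (v # take k ys) (ys ! k))"
    by (subst prod.shift_bounds_Suc_ivl) (simp add: atLeast0LessThan)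
  finally show ?thesis .
qed

lemma ex_play_measure:
  "\<exists>M. sets M = sets S \<and> prob_space M \<and>
     (\<forall>xs. measure M {\<omega> \<in> space M. stake (length xs) \<omega> = xs} = prefix_prob V1 V2 d \<sigma>1 \<sigma>2 v xs)"
proof (intro exI conjI allI)
  let ?SB = "stream_space (measure_pmf choice_pmf)"
  let ?play = "\<lambda>\<omega>. v ## hist_stream (next_vertex \<sigma>1 \<sigma>2) [v] \<omega>"
  interpret SB: prob_space ?SB
    by (rule prob_space.prob_space_stream_space, rule prob_space_measure_pmf)
  have play_meas: "?play \<in> ?SB \<rightarrow>\<^sub>M S"
    using measurable_hist_stream
    by (intro measurable_Stream) (simp_all add: measurable_cong_sets[OF sets_stream_space_measure_pmf refl])
  define M where "M = distr ?SB S ?play"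
  show "sets M = sets S" "prob_space M"
    unfolding M_def by (simp_all add: SB.prob_space_distr[OF play_meas])
  fix xs
  have "measure M {\<omega> \<in> space M. stake (length xs) \<omega> = xs}
      = measure ?SB {\<omega>. stake (length xs) (?play \<omega>) = xs}"
    unfolding M_def using sets_stake_cylinder
    by (subst measure_distr[OF play_meas]) (simp_all add: space_stream_space vimage_def)
  also have "\<dots> = prefix_prob V1 V2 d \<sigma>1 \<sigma>2 v xs"
  proof (cases xs)
    case Nil
    then show ?thesis
      using SB.prob_space by (simp add: space_stream_space prefix_prob_def)
  next
    case (Cons x ys)
    show ?thesis
    proof (cases "x = v")
      case True
      have "measure ?SB {\<omega>. stake (length ys) (hist_stream (next_vertex \<sigma>1 \<sigma>2) [v] \<omega>) = ys}
          = (\<Prod>k<length ys. pmf (map_pmf (next_vertex \<sigma>1 \<sigma>2 (v # take k ys)) choice_pmf) (ys ! k))"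
        using emeasure_hist_stream_cylinder[of choice_pmf ys "next_vertex \<sigma>1 \<sigma>2" "[v]"]
        by (simp add: SB.emeasure_eq_measure prod_nonneg)
      then show ?thesis
        using Cons True by (simp add: prefix_prob_Cons pmf_map_next_vertex)
    qed (simp add: Cons prefix_prob_def)
  qed
  finally show "measure M {\<omega> \<in> space M. stake (length xs) \<omega> = xs} = prefix_prob V1 V2 d \<sigma>1 \<sigma>2 v xs" .
qed

lemma play_measure_spec:
  "sets (PM \<sigma>1 \<sigma>2 v) = sets S \<and> prob_space (PM \<sigma>1 \<sigma>2 v) \<and>
     (\<forall>xs. measure (PM \<sigma>1 \<sigma>2 v) {\<omega> \<in> space (PM \<sigma>1 \<sigma>2 v). stake (length xs) \<omega> = xs}
        = prefix_prob V1 V2 d \<sigma>1 \<sigma>2 v xs)"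
  unfolding play_measure_def by (rule someI_ex[OF ex_play_measure])

lemma sets_play_measure [measurable_cong]: "sets (PM \<sigma>1 \<sigma>2 v) = sets S"
  using play_measure_spec by blast

lemma prob_space_play_measure: "prob_space (PM \<sigma>1 \<sigma>2 v)"
  using play_measure_spec by blast

lemma space_play_measure: "space (PM \<sigma>1 \<sigma>2 v) = UNIV"
  using sets_eq_imp_space_eq[OF sets_play_measure] by (simp add: space_stream_space)

lemma measure_play_measure_cylinder:
  "measure (PM \<sigma>1 \<sigma>2 v) {\<omega>. stake (length xs) \<omega> = xs} = prefix_prob V1 V2 d \<sigma>1 \<sigma>2 v xs"
  using play_measure_spec[of \<sigma>1 \<sigma>2 v] by (simp add: space_play_measure)

lemma play_measure_eqI:
  assumes "prob_space N" "sets N = sets S"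
    and cylinder: "\<And>xs. xs \<noteq> [] \<Longrightarrow> measure N {\<omega>. stake (length xs) \<omega> = xs} = prefix_prob V1 V2 d \<sigma>1 \<sigma>2 v xs"
  shows "N = PM \<sigma>1 \<sigma>2 v"
proof (rule stream_space_eq_sstart[of UNIV])
  interpret N: prob_space N by fact
  interpret P: prob_space "PM \<sigma>1 \<sigma>2 v" by (rule prob_space_play_measure)
  fix xs :: "'v list"
  assume "xs \<noteq> []"
  have "sstart UNIV xs = {\<omega>. stake (length xs) \<omega> = xs}"
    by (auto simp: sstart_eq list_eq_iff_nth_eq)
  then show "emeasure N (sstart UNIV xs) = emeasure (PM \<sigma>1 \<sigma>2 v) (sstart UNIV xs)"
    using cylinder[OF \<open>xs \<noteq> []\<close>]
    by (simp add: N.emeasure_eq_measure P.emeasure_eq_measure measure_play_measure_cylinder)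
qed (use assms prob_space_play_measure sets_play_measure in auto)

lemma AE_play_measure_avoids_null_cylinder:
  assumes "prefix_prob V1 V2 d \<sigma>1 \<sigma>2 v xs = 0"
  shows "AE \<omega> in PM \<sigma>1 \<sigma>2 v. stake (length xs) \<omega> \<noteq> xs"
proof -
  interpret P: prob_space "PM \<sigma>1 \<sigma>2 v" by (rule prob_space_play_measure)
  have "{\<omega>. stake (length xs) \<omega> = xs} \<in> sets (PM \<sigma>1 \<sigma>2 v)"
    using sets_stake_cylinder by (simp add: sets_play_measure)
  then show ?thesis
    using assms by (simp add: AE_iff_measurable space_play_measure P.emeasure_eq_measure
        measure_play_measure_cylinder)
qed

lemma trans_prob_eq_0_if_not_edge:
  assumes "\<sigma>1 \<in> strategies V1 E" "\<sigma>2 \<in> strategies V2 E" "h \<noteq> []" "y \<notin> E (last h)"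
  shows "trans_prob V1 V2 d \<sigma>1 \<sigma>2 h y = 0"
  using assms d_eq_0 by (cases rule: owner_cases[of "last h"]) (auto simp: trans_prob_def strategies_def)

lemma prefix_prob_eq_0_if_not_edge:
  assumes strat: "\<sigma>1 \<in> strategies V1 E" "\<sigma>2 \<in> strategies V2 E"
    and i: "Suc i < length xs" and not_edge: "xs ! Suc i \<notin> E (xs ! i)"
  shows "prefix_prob V1 V2 d \<sigma>1 \<sigma>2 v xs = 0"
proof -
  have "last (take (Suc i) xs) = xs ! i"
    using i by (simp add: take_Suc_conv_app_nth)
  then have "trans_prob V1 V2 d \<sigma>1 \<sigma>2 (take (Suc i) xs) (xs ! Suc i) = 0"
    using i not_edge by (intro trans_prob_eq_0_if_not_edge[OF strat]) auto
  then have "(\<Prod>k\<in>{1..<length xs}. trans_prob V1 V2 d \<sigma>1 \<sigma>2 (take k xs) (xs ! k)) = 0"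
    using i by (intro prod_zero) (auto intro!: bexI[of _ "Suc i"])
  moreover have "xs \<noteq> []"
    using i by auto
  ultimately show ?thesis
    by (simp add: prefix_prob_def)
qed

lemma AE_play_measure_is_play:
  assumes strat: "\<sigma>1 \<in> strategies V1 E" "\<sigma>2 \<in> strategies V2 E"
  shows "AE \<omega> in PM \<sigma>1 \<sigma>2 v. is_play E \<omega>"
proof -
  have "AE \<omega> in PM \<sigma>1 \<sigma>2 v. \<omega> !! Suc i \<in> E (\<omega> !! i)" for i
  proof -
    let ?L = "{xs :: 'v list. set xs \<subseteq> UNIV \<and> length xs = Suc (Suc i)}"
    have "finite ?L"
      by (rule finite_lists_length_eq) simp
    then have "AE \<omega> in PM \<sigma>1 \<sigma>2 v. \<forall>xs\<in>?L. xs ! Suc i \<notin> E (xs ! i) \<longrightarrow> stake (length xs) \<omega> \<noteq> xs"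
    proof (rule AE_finite_allI)
      fix xs
      assume "xs \<in> ?L"
      then have "Suc i < length xs"
        by simp
      then show "AE \<omega> in PM \<sigma>1 \<sigma>2 v. xs ! Suc i \<notin> E (xs ! i) \<longrightarrow> stake (length xs) \<omega> \<noteq> xs"
        using AE_play_measure_avoids_null_cylinder[OF prefix_prob_eq_0_if_not_edge[OF strat]]
        by (cases "xs ! Suc i \<in> E (xs ! i)") auto
    qed
    then show ?thesis
    proof (rule AE_mp, intro AE_I2 impI)
      fix \<omega>
      assume "\<forall>xs\<in>?L. xs ! Suc i \<notin> E (xs ! i) \<longrightarrow> stake (length xs) \<omega> \<noteq> xs"
      then have "stake (Suc (Suc i)) \<omega> ! Suc i \<in> E (stake (Suc (Suc i)) \<omega> ! i)"
        by (metis (mono_tags, lifting) length_stake mem_Collect_eq subset_UNIV)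
      then show "\<omega> !! Suc i \<in> E (\<omega> !! i)"
        by (simp only: stake_nth lessI less_SucI)
    qed
  qed
  then show ?thesis
    unfolding is_play_def by (simp add: AE_all_countable)
qed

lemma AE_play_measure_shd: "AE \<omega> in PM \<sigma>1 \<sigma>2 v. shd \<omega> = v"
proof -
  have "AE \<omega> in PM \<sigma>1 \<sigma>2 v. \<forall>w\<in>UNIV - {v}. stake (length [w]) \<omega> \<noteq> [w]"
    by (intro AE_finite_allI AE_play_measure_avoids_null_cylinder) (auto simp: prefix_prob_def)
  then show ?thesis
    by (rule AE_mp) (auto intro!: AE_I2)
qed

end

section \<open>Conditioning on the first move\<close>

lemma emeasure_density_indicator_divide:
  assumes "0 < c" "A \<in> sets M" "B \<in> sets M" "finite_measure M"
  shows "emeasure (density M (\<lambda>x. ennreal (indicator A x / c))) B = ennreal (measure M (A \<inter> B) / c)"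
proof -
  note [measurable] = \<open>A \<in> sets M\<close> \<open>B \<in> sets M\<close>
  have "emeasure (density M (\<lambda>x. ennreal (indicator A x / c))) B
      = (\<integral>\<^sup>+x. ennreal (1 / c) * indicator (A \<inter> B) x \<partial>M)"
    by (subst emeasure_density) (auto intro!: nn_integral_cong split: split_indicator)
  also have "\<dots> = ennreal (1 / c) * emeasure M (A \<inter> B)"
    by (rule nn_integral_cmult_indicator) simp
  also have "\<dots> = ennreal (measure M (A \<inter> B) / c)"
    using assms by (simp add: finite_measure.emeasure_eq_measure ennreal_mult''[symmetric])
  finally show ?thesis .
qed

lemma sets_stake_stl_cylinder:
  "{\<omega>. stake n (stl \<omega>) = xs} \<in> sets (stream_space (count_space (UNIV :: 'a::countable set)))"
proof -
  have "{\<omega> \<in> space (stream_space (count_space UNIV)). stake n (stl \<omega>) = xs}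
      \<in> sets (stream_space (count_space (UNIV :: 'a set)))"
    by measurable
  then show ?thesis
    by (simp add: space_stream_space)
qed

lemma sets_snth_eq:
  "{\<omega>. \<omega> !! n = x} \<in> sets (stream_space (count_space (UNIV :: 'a::countable set)))"
proof -
  have "{\<omega> \<in> space (stream_space (count_space UNIV)). \<omega> !! n = x}
      \<in> sets (stream_space (count_space (UNIV :: 'a set)))"
    by measurable
  then show ?thesis
    by (simp add: space_stream_space)
qed

lemma is_play_stl: "is_play E \<omega> \<Longrightarrow> is_play E (stl \<omega>)"
  unfolding is_play_def by (metis snth.simps(2))

lemma prefix_independent_stl:
  "prefix_independent E \<phi> \<Longrightarrow> is_play E \<omega> \<Longrightarrow> \<phi> (stl \<omega>) = \<phi> \<omega>"
  unfolding prefix_independent_def by (metis is_play_stl sdrop.simps)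

context stoch_game
begin

lemma trans_prob_Cons:
  "h \<noteq> [] \<Longrightarrow> trans_prob V1 V2 d \<sigma>1 \<sigma>2 (u # h) y
     = trans_prob V1 V2 d (\<lambda>h. \<sigma>1 (u # h)) (\<lambda>h. \<sigma>2 (u # h)) h y"
  by (simp add: trans_prob_def)

lemma prefix_prob_first_move:
  assumes u: "u \<in> Vp"
  shows "prefix_prob V1 V2 d \<sigma>1 \<sigma>2 u (u # v # ys)
     = d u v * prefix_prob V1 V2 d (\<lambda>h. \<sigma>1 (u # h)) (\<lambda>h. \<sigma>2 (u # h)) v (v # ys)"
proof -
  have "trans_prob V1 V2 d \<sigma>1 \<sigma>2 [u] v = d u v"
    using u Vp_not_V1 Vp_not_V2 by (simp add: trans_prob_def)
  then show ?thesis
    by (simp add: prefix_prob_Cons prod.lessThan_Suc_shift trans_prob_Cons del: prod.lessThan_Suc)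
qed

lemma measure_first_move_cylinder:
  assumes u: "u \<in> Vp"
  shows "measure (PM \<sigma>1 \<sigma>2 u) ({\<omega>. \<omega> !! Suc 0 = v} \<inter> {\<omega>. stake (length ys) (stl \<omega>) = ys})
     = d u v * prefix_prob V1 V2 d (\<lambda>h. \<sigma>1 (u # h)) (\<lambda>h. \<sigma>2 (u # h)) v ys"
proof -
  let ?M = "PM \<sigma>1 \<sigma>2 u"
  let ?C = "\<lambda>ys. {\<omega>. stake (length ys) (stl \<omega>) = ys}"
  let ?p = "prefix_prob V1 V2 d (\<lambda>h. \<sigma>1 (u # h)) (\<lambda>h. \<sigma>2 (u # h)) v"
  have tail: "measure ?M (?C (v # zs)) = d u v * ?p (v # zs)" for zs
  proof -
    have "AE \<omega> in ?M. (\<omega> \<in> ?C (v # zs)) = (\<omega> \<in> {\<omega>. stake (length (u # v # zs)) \<omega> = u # v # zs})"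
      using AE_play_measure_shd by eventually_elim auto
    then have "measure ?M (?C (v # zs)) = measure ?M {\<omega>. stake (length (u # v # zs)) \<omega> = u # v # zs}"
      by (rule measure_eq_AE) (simp_all only: sets_play_measure sets_stake_stl_cylinder sets_stake_cylinder)
    then show ?thesis
      by (simp only: measure_play_measure_cylinder prefix_prob_first_move[OF u])
  qed
  show ?thesis
  proof (cases ys)
    case Nil
    then have "{\<omega>. \<omega> !! Suc 0 = v} \<inter> ?C ys = ?C [v]"
      by auto
    with Nil tail[of "[]"] show ?thesis
      by (simp add: prefix_prob_def)
  next
    case (Cons x zs)
    show ?thesis
    proof (cases "x = v")
      case True
      with Cons have "{\<omega>. \<omega> !! Suc 0 = v} \<inter> ?C ys = ?C (v # zs)"
        by auto
      with Cons True tail[of zs] show ?thesis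
        by simp
    next
      case False
      with Cons have "{\<omega>. \<omega> !! Suc 0 = v} \<inter> ?C ys = {}"
        by auto
      with Cons False show ?thesis
        by (simp add: prefix_prob_def)
    qed
  qed
qed

text \<open>The density conditions on the first move being \<open>v\<close>.\<close>

lemma play_measure_first_move:
  assumes u: "u \<in> Vp" and v: "v \<in> E u"
  shows "distr (density (PM \<sigma>1 \<sigma>2 u) (\<lambda>\<omega>. ennreal (indicator {\<omega>. \<omega> !! Suc 0 = v} \<omega> / d u v))) S stl
     = PM (\<lambda>h. \<sigma>1 (u # h)) (\<lambda>h. \<sigma>2 (u # h)) v"
    (is "distr ?K S stl = _")
proof -
  let ?M = "PM \<sigma>1 \<sigma>2 u"
  let ?A = "{\<omega>. \<omega> !! Suc 0 = v}"
  let ?C = "\<lambda>ys. {\<omega>. stake (length ys) (stl \<omega>) = ys}"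
  interpret M: prob_space ?M
    by (rule prob_space_play_measure)
  have A: "?A \<in> sets ?M"
    unfolding sets_play_measure by (rule sets_snth_eq)
  have tail_sets: "?C xs \<in> sets ?M" for xs
    unfolding sets_play_measure by (rule sets_stake_stl_cylinder)
  have K: "emeasure ?K B = ennreal (measure ?M (?A \<inter> B) / d u v)" if "B \<in> sets ?M" for B
    using emeasure_density_indicator_divide[OF d_pos[OF u v] A that M.finite_measure_axioms] .
  have "measure ?M ?A = d u v"
    using measure_first_move_cylinder[OF u, of \<sigma>1 \<sigma>2 v "[]"] by (simp add: prefix_prob_def)
  then have "prob_space ?K"
    using K[OF sets.top] d_pos[OF u v] by (intro prob_spaceI) (simp add: space_play_measure)
  have stl_meas: "stl \<in> ?K \<rightarrow>\<^sub>M S"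
    by (simp add: measurable_cong_sets[OF _ refl, of ?K S] sets_play_measure)
  show ?thesis
  proof (rule play_measure_eqI)
    show "prob_space (distr ?K S stl)"
      by (rule prob_space.prob_space_distr[OF \<open>prob_space ?K\<close> stl_meas])
    fix xs :: "'v list"
    have "measure (distr ?K S stl) {\<omega>. stake (length xs) \<omega> = xs} = measure ?K (?C xs)"
      by (subst measure_distr[OF stl_meas sets_stake_cylinder]) (simp add: space_play_measure vimage_def)
    also have "\<dots> = measure ?M (?A \<inter> ?C xs) / d u v"
      using d_pos[OF u v]
      unfolding measure_def[of ?K] K[OF tail_sets]
      by simp
    also have "\<dots> = prefix_prob V1 V2 d (\<lambda>h. \<sigma>1 (u # h)) (\<lambda>h. \<sigma>2 (u # h)) v xs"
      using d_pos[OF u v] unfolding measure_first_move_cylinder[OF u] by simp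
    finally show "measure (distr ?K S stl) {\<omega>. stake (length xs) \<omega> = xs}
        = prefix_prob V1 V2 d (\<lambda>h. \<sigma>1 (u # h)) (\<lambda>h. \<sigma>2 (u # h)) v xs" .
  qed simp
qed

lemma integral_first_move:
  assumes u: "u \<in> Vp" and v: "v \<in> E u" and f: "f \<in> borel_measurable S"
  shows "integral\<^sup>L (PM \<sigma>1 \<sigma>2 u) (\<lambda>\<omega>. indicator {\<omega>. \<omega> !! Suc 0 = v} \<omega> * f (stl \<omega>))
     = d u v * integral\<^sup>L (PM (\<lambda>h. \<sigma>1 (u # h)) (\<lambda>h. \<sigma>2 (u # h)) v) f"
proof -
  let ?M = "PM \<sigma>1 \<sigma>2 u"
  let ?A = "{\<omega>. \<omega> !! Suc 0 = v}"
  let ?K = "density ?M (\<lambda>\<omega>. ennreal (indicator ?A \<omega> / d u v))"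
  have stl: "stl \<in> ?K \<rightarrow>\<^sub>M S"
    by (simp add: measurable_cong_sets[OF _ refl, of ?K S] sets_play_measure)
  have "integral\<^sup>L (PM (\<lambda>h. \<sigma>1 (u # h)) (\<lambda>h. \<sigma>2 (u # h)) v) f = integral\<^sup>L ?K (\<lambda>\<omega>. f (stl \<omega>))"
    unfolding play_measure_first_move[OF u v, symmetric] by (rule integral_distr[OF stl f])
  also have "\<dots> = integral\<^sup>L ?M (\<lambda>\<omega>. (indicator ?A \<omega> / d u v) *\<^sub>R f (stl \<omega>))"
    using sets_snth_eq f d_pos[OF u v]
    by (intro integral_density) (simp_all add: measurable_cong_sets[OF sets_play_measure refl])
  also have "\<dots> = integral\<^sup>L ?M (\<lambda>\<omega>. indicator ?A \<omega> * f (stl \<omega>)) / d u v"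
    by simp
  finally show ?thesis
    using d_pos[OF u v] by simp
qed

end

section \<open>The value at a random vertex\<close>

context stoch_game
begin

lemma strategy_Cons: "\<sigma> \<in> strategies Vi E \<Longrightarrow> (\<lambda>h. \<sigma> (u # h)) \<in> strategies Vi E"
  unfolding strategies_def by auto

definition any_strategy :: "'v list \<Rightarrow> 'v" where
  "any_strategy h = (SOME x. x \<in> E (last h))"

lemma any_strategy: "any_strategy \<in> strategies Vi E"
  unfolding strategies_def any_strategy_def using E_nonempty by (simp add: some_in_eq)

definition follow_after_first_move :: "('v \<Rightarrow> 'v list \<Rightarrow> 'v) \<Rightarrow> 'v list \<Rightarrow> 'v" where
  "follow_after_first_move \<tau> h = (if tl h \<noteq> [] then \<tau> (hd (tl h)) (tl h) else any_strategy h)"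

lemma follow_after_first_move_strategy:
  assumes "\<And>v. \<tau> v \<in> strategies Vi E"
  shows "follow_after_first_move \<tau> \<in> strategies Vi E"
proof -
  have "\<tau> (hd (tl h)) (tl h) \<in> E (last h)" if "tl h \<noteq> []" "last h \<in> Vi" for h
    using assms[of "hd (tl h)"] that by (auto simp: strategies_def last_tl)
  then show ?thesis
    using any_strategy[of Vi] by (auto simp: strategies_def follow_after_first_move_def)
qed

lemma play_measure_cong_P2:
  assumes "\<And>h. h \<noteq> [] \<Longrightarrow> hd h = v \<Longrightarrow> \<sigma>2 h = \<sigma>2' h"
  shows "PM \<sigma>1 \<sigma>2 v = PM \<sigma>1 \<sigma>2' v"
proof -
  have "trans_prob V1 V2 d \<sigma>1 \<sigma>2 (take k xs) y = trans_prob V1 V2 d \<sigma>1 \<sigma>2' (take k xs) y"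
    if "xs \<noteq> []" "hd xs = v" "0 < k" for xs k y
    using assms[of "take k xs"] that by (simp add: trans_prob_def)
  then have "prefix_prob V1 V2 d \<sigma>1 \<sigma>2 v = prefix_prob V1 V2 d \<sigma>1 \<sigma>2' v"
    by (auto simp: fun_eq_iff prefix_prob_def intro!: prod.cong)
  then show ?thesis
    by (simp add: play_measure_def)
qed

lemma play_measure_follow_after_first_move:
  "PM \<sigma>1 (\<lambda>h. follow_after_first_move \<tau> (u # h)) v = PM \<sigma>1 (\<tau> v) v"
  by (rule play_measure_cong_P2) (simp add: follow_after_first_move_def)

end

locale objective_game = stoch_game V1 V2 Vp E d
  for V1 V2 Vp :: "'v::finite set" and E :: "'v \<Rightarrow> 'v set" and d :: "'v \<Rightarrow> 'v \<Rightarrow> real" +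
  fixes \<phi> :: "'v stream \<Rightarrow> real" and W :: real
  assumes measurable_objective: "\<phi> \<in> borel_measurable S"
    and bounded: "is_play E \<rho> \<Longrightarrow> \<bar>\<phi> \<rho>\<bar> \<le> W"
    and prefix_indep: "prefix_independent E \<phi>"
begin

abbreviation payoff :: "('v list \<Rightarrow> 'v) \<Rightarrow> ('v list \<Rightarrow> 'v) \<Rightarrow> 'v \<Rightarrow> real" where
  "payoff \<sigma>1 \<sigma>2 v \<equiv> expected_payoff V1 V2 d \<phi> \<sigma>1 \<sigma>2 v"

lemma integrable_play_measure:
  assumes "\<sigma>1 \<in> strategies V1 E" "\<sigma>2 \<in> strategies V2 E"
    and "f \<in> borel_measurable S" "\<And>\<omega>. is_play E \<omega> \<Longrightarrow> \<bar>f \<omega>\<bar> \<le> W"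
  shows "integrable (PM \<sigma>1 \<sigma>2 v) f"
proof -
  interpret P: prob_space "PM \<sigma>1 \<sigma>2 v"
    by (rule prob_space_play_measure)
  show ?thesis
  proof (rule P.integrable_const_bound)
    show "AE \<omega> in PM \<sigma>1 \<sigma>2 v. norm (f \<omega>) \<le> W"
      using AE_play_measure_is_play[OF assms(1,2)] by eventually_elim (simp add: assms(4))
  qed (use assms(3) in \<open>simp add: measurable_cong_sets[OF sets_play_measure refl]\<close>)
qed

lemma abs_payoff_le:
  assumes "\<sigma>1 \<in> strategies V1 E" "\<sigma>2 \<in> strategies V2 E"
  shows "\<bar>payoff \<sigma>1 \<sigma>2 v\<bar> \<le> W"
proof -
  interpret P: prob_space "PM \<sigma>1 \<sigma>2 v"
    by (rule prob_space_play_measure)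
  have "AE \<omega> in PM \<sigma>1 \<sigma>2 v. \<bar>\<phi> \<omega>\<bar> \<le> W"
    using AE_play_measure_is_play[OF assms] by eventually_elim (rule bounded)
  then have "- W \<le> payoff \<sigma>1 \<sigma>2 v" "payoff \<sigma>1 \<sigma>2 v \<le> W"
    using integrable_play_measure[OF assms measurable_objective bounded] unfolding expected_payoff_def
    by (auto intro!: P.integral_ge_const P.integral_le_const elim: AE_mp)
  then show ?thesis
    by linarith
qed

lemma payoff_first_move:
  assumes u: "u \<in> Vp" and strat: "\<sigma>1 \<in> strategies V1 E" "\<sigma>2 \<in> strategies V2 E"
  shows "payoff \<sigma>1 \<sigma>2 u = (\<Sum>v\<in>E u. d u v * payoff (\<lambda>h. \<sigma>1 (u # h)) (\<lambda>h. \<sigma>2 (u # h)) v)"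
proof -
  let ?M = "PM \<sigma>1 \<sigma>2 u"
  let ?A = "\<lambda>v. {\<omega>. \<omega> !! Suc 0 = v}"
  let ?f = "\<lambda>v \<omega>. indicator (?A v) \<omega> * \<phi> (stl \<omega>)"
  have f: "?f v \<in> borel_measurable S" for v
    using sets_snth_eq measurable_objective by measurable
  have "AE \<omega> in ?M. \<phi> \<omega> = (\<Sum>v\<in>E u. ?f v \<omega>)"
    using AE_play_measure_is_play[OF strat] AE_play_measure_shd
  proof eventually_elim
    case (elim \<omega>)
    then have "\<omega> !! Suc 0 \<in> E u"
      unfolding is_play_def by (metis snth.simps(1))
    then have "(\<Sum>v\<in>E u. ?f v \<omega>) = \<phi> (stl \<omega>)"
      by (simp add: indicator_def sum.delta)
    then show ?case
      using prefix_independent_stl[OF prefix_indep elim(1)] by simp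
  qed
  then have "payoff \<sigma>1 \<sigma>2 u = integral\<^sup>L ?M (\<lambda>\<omega>. \<Sum>v\<in>E u. ?f v \<omega>)"
    unfolding expected_payoff_def using measurable_objective f
    by (intro integral_cong_AE) (simp_all add: measurable_cong_sets[OF sets_play_measure refl])
  also have "\<dots> = (\<Sum>v\<in>E u. integral\<^sup>L ?M (?f v))"
  proof (rule Bochner_Integration.integral_sum)
    fix v
    show "integrable ?M (?f v)"
    proof (rule integrable_play_measure[OF strat f])
      fix \<omega>
      assume "is_play E \<omega>"
      then have "\<bar>\<phi> (stl \<omega>)\<bar> \<le> W"
        by (intro bounded is_play_stl)
      then show "\<bar>?f v \<omega>\<bar> \<le> W"
        by (auto simp: indicator_def)
    qed
  qed
  also have "\<dots> = (\<Sum>v\<in>E u. d u v * payoff (\<lambda>h. \<sigma>1 (u # h)) (\<lambda>h. \<sigma>2 (u # h)) v)"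
    unfolding expected_payoff_def by (intro sum.cong refl integral_first_move[OF u _ measurable_objective])
  finally show ?thesis .
qed

abbreviation val :: "'v \<Rightarrow> real" where
  "val \<equiv> game_value V1 V2 E d \<phi>"

lemma bdd_below_payoffs:
  assumes "\<sigma>1 \<in> strategies V1 E"
  shows "bdd_below ((\<lambda>\<sigma>2. payoff \<sigma>1 \<sigma>2 v) ` strategies V2 E)"
proof (rule bdd_belowI2)
  fix \<sigma>2
  assume "\<sigma>2 \<in> strategies V2 E"
  from abs_payoff_le[OF assms this, where v=v] show "- W \<le> payoff \<sigma>1 \<sigma>2 v"
    by linarith
qed

lemma inf_payoff_le_val:
  assumes "\<sigma>1 \<in> strategies V1 E"
  shows "(INF \<sigma>2\<in>strategies V2 E. payoff \<sigma>1 \<sigma>2 v) \<le> val v"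
  unfolding game_value_def
proof (rule cSUP_upper[OF assms])
  have "(INF \<sigma>2\<in>strategies V2 E. payoff \<sigma>' \<sigma>2 v) \<le> W" if "\<sigma>' \<in> strategies V1 E" for \<sigma>'
    using cINF_lower[OF bdd_below_payoffs[OF that, where v=v] any_strategy]
      abs_payoff_le[OF that any_strategy, where v=v]
    by linarith
  then show "bdd_above ((\<lambda>\<sigma>1. INF \<sigma>2\<in>strategies V2 E. payoff \<sigma>1 \<sigma>2 v) ` strategies V1 E)"
    by (auto simp: bdd_above_def)
qed

lemma eps_optimal_responses:
  assumes "0 < e"
  obtains \<tau> where "\<And>v. \<tau> v \<in> strategies V2 E"
    "\<And>v. payoff \<sigma>1 (\<tau> v) v < (INF \<sigma>2\<in>strategies V2 E. payoff \<sigma>1 \<sigma>2 v) + e"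
proof -
  have "strategies V2 E \<noteq> {}"
    using any_strategy by blast
  then have "\<exists>x\<in>(\<lambda>\<sigma>2. payoff \<sigma>1 \<sigma>2 v) ` strategies V2 E. x < (INF \<sigma>2\<in>strategies V2 E. payoff \<sigma>1 \<sigma>2 v) + e"
    for v
    using assms by (intro cInf_lessD) auto
  then have "\<exists>\<sigma>2\<in>strategies V2 E. payoff \<sigma>1 \<sigma>2 v < (INF \<sigma>2\<in>strategies V2 E. payoff \<sigma>1 \<sigma>2 v) + e" for v
    by blast
  then show thesis
    using that by metis
qed

lemma val_le_average:
  assumes u: "u \<in> Vp"
  shows "val u \<le> (\<Sum>v\<in>E u. d u v * val v)"
  unfolding game_value_def[of _ _ _ _ _ u]
proof (rule cSUP_least)
  show "strategies V1 E \<noteq> {}"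
    using any_strategy by blast
  fix \<sigma>1
  assume \<sigma>1: "\<sigma>1 \<in> strategies V1 E"
  let ?\<sigma>1' = "\<lambda>h. \<sigma>1 (u # h)"
  show "(INF \<sigma>2\<in>strategies V2 E. payoff \<sigma>1 \<sigma>2 u) \<le> (\<Sum>v\<in>E u. d u v * val v)"
  proof (rule field_le_epsilon)
    fix e :: real
    assume "0 < e"
    obtain \<tau> where \<tau>: "\<And>v. \<tau> v \<in> strategies V2 E"
      "\<And>v. payoff ?\<sigma>1' (\<tau> v) v < (INF \<sigma>2\<in>strategies V2 E. payoff ?\<sigma>1' \<sigma>2 v) + e"
      using eps_optimal_responses[OF \<open>0 < e\<close>] by blast
    let ?\<sigma>2 = "follow_after_first_move \<tau>"
    have \<sigma>2: "?\<sigma>2 \<in> strategies V2 E"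
      by (rule follow_after_first_move_strategy[OF \<tau>(1)])
    have "(INF \<sigma>2\<in>strategies V2 E. payoff \<sigma>1 \<sigma>2 u) \<le> payoff \<sigma>1 ?\<sigma>2 u"
      by (rule cINF_lower[OF bdd_below_payoffs[OF \<sigma>1] \<sigma>2])
    also have "\<dots> = (\<Sum>v\<in>E u. d u v * payoff ?\<sigma>1' (\<lambda>h. ?\<sigma>2 (u # h)) v)"
      by (rule payoff_first_move[OF u \<sigma>1 \<sigma>2])
    also have "\<dots> = (\<Sum>v\<in>E u. d u v * payoff ?\<sigma>1' (\<tau> v) v)"
      by (simp add: expected_payoff_def play_measure_follow_after_first_move)
    also have "\<dots> \<le> (\<Sum>v\<in>E u. d u v * (val v + e))"
    proof (intro sum_mono mult_left_mono d_nonneg[OF u])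
      fix v
      show "payoff ?\<sigma>1' (\<tau> v) v \<le> val v + e"
        using \<tau>(2)[of v] inf_payoff_le_val[OF strategy_Cons[OF \<sigma>1, where u=u], where v=v] by linarith
    qed
    also have "\<dots> = (\<Sum>v\<in>E u. d u v * val v) + e"
      by (simp add: algebra_simps sum.distrib sum_distrib_left[symmetric] sum_d[OF u])
    finally show "(INF \<sigma>2\<in>strategies V2 E. payoff \<sigma>1 \<sigma>2 u) \<le> (\<Sum>v\<in>E u. d u v * val v) + e" .
  qed
qed

end

section \<open>Substochastic matrices\<close>

lemma invertible_mat_if_det_nonzero:
  fixes A :: "'a::field mat"
  assumes A: "A \<in> carrier_mat n n" and "det A \<noteq> 0"
  shows "invertible_mat A"
proof -
  from det_non_zero_imp_unit[OF assms, of "()"]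
  obtain B where "B \<in> carrier_mat n n" "B * A = 1\<^sub>m n" "A * B = 1\<^sub>m n"
    by (auto simp: Units_def ring_mat_simps)
  with A show ?thesis
    by (auto simp: invertible_mat_def inverts_mat_def)
qed

lemma id_minus_mat_mult_vec_nth:
  fixes Q :: "nat \<Rightarrow> nat \<Rightarrow> 'a::comm_ring_1"
  assumes "y \<in> carrier_vec m" "i < m"
  shows "((1\<^sub>m m - mat m m (\<lambda>(i, j). Q i j)) *\<^sub>v y) $ i = y $ i - (\<Sum>j<m. Q i j * y $ j)"
proof -
  have "((1\<^sub>m m - mat m m (\<lambda>(i, j). Q i j)) *\<^sub>v y) $ i
      = (\<Sum>j<m. ((if i = j then 1 else 0) - Q i j) * y $ j)"
    using assms by (simp add: scalar_prod_def atLeast0LessThan)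
  also have "\<dots> = (\<Sum>j<m. (if i = j then y $ j else 0) - Q i j * y $ j)"
    by (intro sum.cong) (simp_all add: algebra_simps)
  also have "\<dots> = y $ i - (\<Sum>j<m. Q i j * y $ j)"
    using assms by (simp add: sum_subtractf)
  finally show ?thesis .
qed

text \<open>The witness is the set of coordinates of maximal modulus.\<close>

lemma substochastic_fixed_vector_closed_class:
  fixes Q :: "nat \<Rightarrow> nat \<Rightarrow> real" and z :: "nat \<Rightarrow> real"
  assumes nonneg: "\<And>i j. i < m \<Longrightarrow> j < m \<Longrightarrow> 0 \<le> Q i j"
    and row_le: "\<And>i. i < m \<Longrightarrow> (\<Sum>j<m. Q i j) \<le> 1"
    and fixed: "\<And>i. i < m \<Longrightarrow> z i = (\<Sum>j<m. Q i j * z j)"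
    and nonzero: "i1 < m" "z i1 \<noteq> 0"
  obtains T where "T \<subseteq> {..<m}" "T \<noteq> {}"
    "\<And>i. i \<in> T \<Longrightarrow> (\<Sum>j<m. Q i j) = 1"
    "\<And>i j. i \<in> T \<Longrightarrow> j < m \<Longrightarrow> 0 < Q i j \<Longrightarrow> j \<in> T"
proof -
  define c where "c = Max ((\<lambda>j. \<bar>z j\<bar>) ` {..<m})"
  define T where "T = {i. i < m \<and> \<bar>z i\<bar> = c}"
  have le_c: "\<bar>z j\<bar> \<le> c" if "j < m" for j
    unfolding c_def using that by (auto intro: Max_ge)
  have "0 < c"
    using le_c[OF nonzero(1)] nonzero(2) by linarith
  have "c \<in> (\<lambda>j. \<bar>z j\<bar>) ` {..<m}"
    unfolding c_def using nonzero(1) by (intro Max_in) auto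
  then have "T \<noteq> {}"
    by (auto simp: T_def)
  have stochastic: "(\<Sum>j<m. Q i j) = 1" and closed: "\<And>j. j < m \<Longrightarrow> 0 < Q i j \<Longrightarrow> j \<in> T"
    if "i \<in> T" for i
  proof -
    from that have i: "i < m" and zi: "\<bar>z i\<bar> = c"
      by (auto simp: T_def)
    have "c \<le> (\<Sum>j<m. Q i j * \<bar>z j\<bar>)"
      using zi fixed[OF i] sum_abs[of "\<lambda>j. Q i j * z j" "{..<m}"]
      by (simp add: abs_mult nonneg[OF i])
    also have "\<dots> \<le> (\<Sum>j<m. Q i j * c)"
      by (intro sum_mono mult_left_mono) (simp_all add: le_c nonneg[OF i])
    also have "\<dots> = c * (\<Sum>j<m. Q i j)"
      by (simp add: sum_distrib_left mult.commute)
    finally have "c * 1 \<le> c * (\<Sum>j<m. Q i j)"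
      by simp
    with \<open>0 < c\<close> row_le[OF i] show "(\<Sum>j<m. Q i j) = 1"
      by (simp add: mult_le_cancel_left_pos)
    then have "(\<Sum>j<m. Q i j * (c - \<bar>z j\<bar>)) = 0"
      using \<open>c \<le> (\<Sum>j<m. Q i j * \<bar>z j\<bar>)\<close> \<open>(\<Sum>j<m. Q i j * \<bar>z j\<bar>) \<le> (\<Sum>j<m. Q i j * c)\<close>
      by (simp add: right_diff_distrib sum_subtractf sum_distrib_right[symmetric])
    then have zero: "\<forall>j\<in>{..<m}. Q i j * (c - \<bar>z j\<bar>) = 0"
      using nonneg[OF i] le_c by (subst sum_nonneg_eq_0_iff[symmetric]) auto
    show "j \<in> T" if "j < m" "0 < Q i j" for j
      using zero[rule_format, of j] that by (simp add: T_def)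
  qed
  show thesis
    by (rule that[OF _ \<open>T \<noteq> {}\<close> stochastic closed]) (auto simp: T_def)
qed

lemma invertible_id_minus_substochastic:
  fixes Q :: "nat \<Rightarrow> nat \<Rightarrow> real"
  assumes nonneg: "\<And>i j. i < m \<Longrightarrow> j < m \<Longrightarrow> 0 \<le> Q i j"
    and row_le: "\<And>i. i < m \<Longrightarrow> (\<Sum>j<m. Q i j) \<le> 1"
    and leaking: "\<And>T. T \<subseteq> {..<m} \<Longrightarrow> T \<noteq> {} \<Longrightarrow>
      (\<And>i j. i \<in> T \<Longrightarrow> j < m \<Longrightarrow> 0 < Q i j \<Longrightarrow> j \<in> T) \<Longrightarrow> \<exists>i\<in>T. (\<Sum>j<m. Q i j) < 1"
  shows "invertible_mat (1\<^sub>m m - mat m m (\<lambda>(i, j). Q i j))" (is "invertible_mat ?A")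
proof (rule invertible_mat_if_det_nonzero)
  show A: "?A \<in> carrier_mat m m"
    by (rule minus_carrier_mat, rule mat_carrier)
  show "det ?A \<noteq> 0"
  proof
    assume "det ?A = 0"
    then obtain y where y: "y \<in> carrier_vec m" "y \<noteq> 0\<^sub>v m" "?A *\<^sub>v y = 0\<^sub>v m"
      using det_0_iff_vec_prod_zero[OF A] by blast
    then obtain i1 where i1: "i1 < m" "y $ i1 \<noteq> 0"
      by (metis eq_vecI index_zero_vec(1,2) carrier_vecD)
    have fixed: "y $ i = (\<Sum>j<m. Q i j * y $ j)" if "i < m" for i
      using id_minus_mat_mult_vec_nth[OF y(1) that, of Q] y(3) that by simp
    obtain T where T: "T \<subseteq> {..<m}" "T \<noteq> {}" "\<And>i. i \<in> T \<Longrightarrow> (\<Sum>j<m. Q i j) = 1"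
      "\<And>i j. i \<in> T \<Longrightarrow> j < m \<Longrightarrow> 0 < Q i j \<Longrightarrow> j \<in> T"
      using substochastic_fixed_vector_closed_class[OF nonneg row_le fixed i1] by blast
    from leaking[OF T(1,2,4)] T(3) show False
      by fastforce
  qed
qed

section \<open>Boundary classes\<close>

lemma sum_over_value_classes:
  assumes "finite A" "distinct b"
  shows "(\<Sum>j<length b. \<Sum>x\<in>A \<inter> {x. g x = b ! j}. f x) = (\<Sum>x\<in>A \<inter> g -` set b. f x)"
proof -
  have "(\<Sum>j<length b. \<Sum>x\<in>A \<inter> {x. g x = b ! j}. f x) = (\<Sum>y\<in>set b. \<Sum>x\<in>A \<inter> {x. g x = y}. f x)"
    using sum_list_distinct_conv_sum_set[OF assms(2), of "\<lambda>y. \<Sum>x\<in>A \<inter> {x. g x = y}. f x"]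
    by (simp add: sum_list_sum_nth atLeast0LessThan)
  also have "\<dots> = (\<Sum>y\<in>set b. \<Sum>x\<in>{x \<in> A \<inter> g -` set b. g x = y}. f x)"
    by (intro sum.cong) auto
  also have "\<dots> = (\<Sum>x\<in>A \<inter> g -` set b. f x)"
    using assms(1) by (intro sum.group) auto
  finally show ?thesis .
qed

context stoch_game
begin

lemma successor_mem_if_full_mass:
  assumes w: "w \<in> Vp" and full: "1 \<le> (\<Sum>v\<in>E w \<inter> A. d w v)" and v: "v \<in> E w"
  shows "v \<in> A"
proof (rule ccontr)
  assume "v \<notin> A"
  have "(\<Sum>v\<in>E w \<inter> A. d w v) < (\<Sum>v\<in>E w. d w v)"
    unfolding sum.inter_restrict[OF finite]
    using v \<open>v \<notin> A\<close> d_pos[OF w] d_nonneg[OF w] by (intro sum_strict_mono_ex1) auto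
  with full sum_d[OF w] show False
    by simp
qed

lemma average_less_at_boundary:
  assumes w: "is_boundary Vp E r w" and below: "\<And>v. v \<in> E w \<Longrightarrow> r v \<le> r w"
  shows "(\<Sum>v\<in>E w. d w v * r v) < r w"
proof -
  from w have "w \<in> Vp" and "\<exists>v\<in>E w. r v \<noteq> r w"
    by (auto simp: is_boundary_def val_class_def)
  then have "(\<Sum>v\<in>E w. d w v * r v) < (\<Sum>v\<in>E w. d w v * r w)"
    using below d_pos by (intro sum_strict_mono_ex1) (auto simp: order_less_le)
  also have "\<dots> = r w"
    using sum_d[OF \<open>w \<in> Vp\<close>] by (simp add: sum_distrib_right[symmetric])
  finally show ?thesis .
qed

lemma boundary_rows_leak:
  fixes r :: "'v \<Rightarrow> real" and b :: "real list" and u :: "nat \<Rightarrow> 'v"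
  assumes sub: "\<And>w. w \<in> Vp \<Longrightarrow> r w \<le> (\<Sum>v\<in>E w. d w v * r v)"
    and "sorted b"
    and u: "\<And>i. i < length b \<Longrightarrow> is_boundary Vp E r (u i) \<and> r (u i) = b ! i"
    and T: "T \<subseteq> {..<length b}" "T \<noteq> {}"
    and closed: "\<And>i j. i \<in> T \<Longrightarrow> j < length b \<Longrightarrow> 0 < (\<Sum>v\<in>E (u i) \<inter> {x. r x = b ! j}. d (u i) v) \<Longrightarrow> j \<in> T"
  shows "\<exists>i\<in>T. (\<Sum>v\<in>E (u i) \<inter> r -` set b. d (u i) v) < 1"
proof (rule ccontr)
  assume no_leak: "\<not> ?thesis"
  define i0 where "i0 = Max T"
  have "finite T"
    using T(1) finite_nat_iff_bounded by blast
  then have "i0 \<in> T" and i0_max: "\<And>k. k \<in> T \<Longrightarrow> k \<le> i0"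
    using T(2) by (simp_all add: i0_def)
  then have "i0 < length b"
    using T(1) by blast
  define w where "w = u i0"
  have w: "is_boundary Vp E r w" "w \<in> Vp" "r w = b ! i0"
    using u[OF \<open>i0 < length b\<close>] by (simp_all add: w_def is_boundary_def)
  have full: "1 \<le> (\<Sum>v\<in>E w \<inter> r -` set b. d w v)"
    using no_leak \<open>i0 \<in> T\<close> by (auto simp: w_def not_less)
  have "r v \<le> r w" if v: "v \<in> E w" for v
  proof -
    obtain k where k: "k < length b" "r v = b ! k"
      using successor_mem_if_full_mass[OF w(2) full v] by (metis vimage_eq in_set_conv_nth)
    have "0 < d w v"
      using d_pos[OF w(2) v] .
    also have "d w v \<le> (\<Sum>v\<in>E w \<inter> {x. r x = b ! k}. d w v)"
      using v k d_nonneg[OF w(2)] by (intro member_le_sum) auto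
    finally have "k \<le> i0"
      using closed[OF \<open>i0 \<in> T\<close> \<open>k < length b\<close>] i0_max by (simp add: w_def)
    with \<open>sorted b\<close> \<open>i0 < length b\<close> show ?thesis
      by (simp add: k(2) w(3) sorted_nth_mono)
  qed
  with sub[OF w(2)] average_less_at_boundary[OF w(1)] show False
    by fastforce
qed

lemma invertible_boundary_matrix:
  fixes r :: "'v \<Rightarrow> real" and u :: "nat \<Rightarrow> 'v"
  defines "b \<equiv> boundary_values Vp E r"
  assumes sub: "\<And>w. w \<in> Vp \<Longrightarrow> r w \<le> (\<Sum>v\<in>E w. d w v * r v)"
    and u: "\<And>i. i < length b \<Longrightarrow> is_boundary Vp E r (u i) \<and> r (u i) = b ! i"
  shows "invertible_mat (1\<^sub>m (length b)
      - mat (length b) (length b) (\<lambda>(i, j). \<Sum>v\<in>E (u i) \<inter> {x. r x = b ! j}. d (u i) v))"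
proof (rule invertible_id_minus_substochastic)
  let ?Q = "\<lambda>i j. \<Sum>v\<in>E (u i) \<inter> {x. r x = b ! j}. d (u i) v"
  have "b = sorted_list_of_set (r ` {v. is_boundary Vp E r v})"
    unfolding b_def boundary_values_def by (simp add: setcompr_eq_image)
  then have "sorted b" "distinct b"
    by simp_all
  have u_Vp: "u i \<in> Vp" if "i < length b" for i
    using u[OF that] by (simp add: is_boundary_def)
  have row: "(\<Sum>j<length b. ?Q i j) = (\<Sum>v\<in>E (u i) \<inter> r -` set b. d (u i) v)" for i
    by (rule sum_over_value_classes[OF finite \<open>distinct b\<close>])
  show "0 \<le> ?Q i j" if "i < length b" for i j
    using d_nonneg[OF u_Vp[OF that]] by (simp add: sum_nonneg)
  show "(\<Sum>j<length b. ?Q i j) \<le> 1" if "i < length b" for i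
    unfolding row sum_d[OF u_Vp[OF that], symmetric]
    using d_nonneg[OF u_Vp[OF that]] by (intro sum_mono2) auto
  show "\<exists>i\<in>T. (\<Sum>j<length b. ?Q i j) < 1"
    if "T \<subseteq> {..<length b}" "T \<noteq> {}" "\<And>i j. i \<in> T \<Longrightarrow> j < length b \<Longrightarrow> 0 < ?Q i j \<Longrightarrow> j \<in> T"
    for T
    unfolding row using boundary_rows_leak[OF sub \<open>sorted b\<close> u that] .
qed

end

theorem proposition12:
  fixes V1 V2 Vp :: "'v::finite set"
    and E :: "'v \<Rightarrow> 'v set"
    and d :: "'v \<Rightarrow> 'v \<Rightarrow> real"
    and \<phi> :: "'v stream \<Rightarrow> real"
    and r :: "'v \<Rightarrow> real"
    and m :: nat
    and u :: "nat \<Rightarrow> 'v"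
  assumes game: "stochastic_game V1 V2 Vp E d"
    and meas: "\<phi> \<in> borel_measurable (stream_space (count_space UNIV))"
    and bdd: "bounded_objective E \<phi>"
    and pind: "prefix_independent E \<phi>"
    and r_def: "r = game_value V1 V2 E d \<phi>"
    and m_def: "m = length (boundary_values Vp E r)"
    and m_pos: "m \<ge> 1"
    and u_bd: "\<forall>i<m. is_boundary Vp E r (u i) \<and> r (u i) = boundary_values Vp E r ! i"
  shows "invertible_mat
           (1\<^sub>m m - mat m m (\<lambda>(i, j). \<Sum>v'\<in>E (u i) \<inter> {x. r x = boundary_values Vp E r ! j}. d (u i) v'))"
proof -
  from bdd obtain W :: int where "\<And>\<rho>. is_play E \<rho> \<Longrightarrow> \<bar>\<phi> \<rho>\<bar> \<le> of_int W"
    unfolding bounded_objective_def by blast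
  then interpret objective_game V1 V2 Vp E d \<phi> "of_int W"
    using game meas pind by unfold_locales
  have "r w \<le> (\<Sum>v\<in>E w. d w v * r v)" if "w \<in> Vp" for w
    unfolding r_def by (rule val_le_average[OF that])
  from invertible_boundary_matrix[OF this] show ?thesis
    using u_bd unfolding m_def by blast
qed

end
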